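(* Let $\lambda\in\mathbb R$ and $G_\lambda(x)=\frac{x^3}{8} - \frac{\lambda x^2}{2} + \frac{\lambda^2 x}{2}$. For $a\ge 1\vee 3\lambda$ and any constant $r\ge 0$, \[\int_a^\infty y^{r} e^{-G_\lambda(y)}\, dy = \frac{a^{r}}{G_\lambda'(a)}e^{-G_\lambda(a)}\Big(1 + O\big(\tfrac{1}{a^3}\big)\Big),\] where the implied constant depends only on $r$.
   Context: $G'_\lambda$ is the derivative of $G_\lambda$; $x\vee y=\max(x,y)$. $f=g(1+O(h))$ means $|f-g|\le C|g|h$. *)

theory Defs
  imports "HOL-Analysis.Analysis"
begin

definition G :: "real \<Rightarrow> real \<Rightarrow> real" where
  "G lam x = x ^ 3 / 8 - lam * x ^ 2 / 2 + lam ^ 2 * x / 2"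

end

theory Submission
  imports Defs "HOL-Real_Asymp.Real_Asymp"
begin

text \<open>
  Put g(y) = y^r e^(-G(y)) and \<Phi>(y) = g(y) / G'(y). Then \<Phi>' = (\<rho> - 1) g with
  \<rho> = r / (y G') - G'' / G'^2. For y \<ge> a \<ge> max 1 (3\<lambda>) we have G'(y) \<ge> 7y^2/72 and
  G''(y) \<le> 80 G'(y)^2 / y^3, so |\<rho>| = O(a^-3), and integrating \<Phi>' over [a, \<infinity>) gives
  \<integral> g = \<Phi>(a) + \<integral> \<rho> g. For the error term, g is dominated by a multiple of G'(y) e^(-G(y)/2):
  the factor (y/a)^r \<le> e^(r(y - a)) is absorbed into e^((G(y) - G(a))/2) because
  G(y) - G(a) \<ge> (y - a)^3/8. This majorant integrates to 2 e^(-G(a)/2), whence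
  \<integral> |\<rho> g| = O(a^-3 \<Phi>(a)).
\<close>

lemma has_integral_atLeast_of_deriv:
  fixes F f :: "real \<Rightarrow> real"
  assumes deriv: "\<And>x. x \<ge> a \<Longrightarrow> (F has_real_derivative f x) (at x)"
    and nonneg: "\<And>x. x \<ge> a \<Longrightarrow> f x \<ge> 0"
    and lim: "(F \<longlongrightarrow> L) at_top"
  shows "(f has_integral (L - F a)) {a..}"
proof (rule has_integral_to_inf)
  have finite: "(f has_integral (F y - F a)) {a..y}" if "a \<le> y" for y
  proof (rule fundamental_theorem_of_calculus[OF that])
    fix x assume "x \<in> {a..y}"
    then have "(F has_real_derivative f x) (at x within {a..y})"
      by (intro has_field_derivative_at_within[OF deriv]) simp
    then show "(F has_vector_derivative f x) (at x within {a..y})"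
      by (simp add: has_real_derivative_iff_has_vector_derivative)
  qed
  show "f integrable_on {a..y}" for y
  proof (cases "a \<le> y")
    case True
    then show ?thesis
      using finite has_integral_integrable by blast
  qed (simp add: integrable_on_empty)
  have "((\<lambda>y. F y - F a) \<longlongrightarrow> L - F a) at_top"
    using lim by (intro tendsto_intros)
  moreover have "\<forall>\<^sub>F y in at_top. F y - F a = integral {a..y} f"
    by (rule eventually_mono[OF eventually_ge_at_top[of a]]) (rule integral_unique[OF finite, symmetric])
  ultimately show "((\<lambda>y. integral {a..y} f) \<longlongrightarrow> L - F a) at_top"
    by (rule Lim_transform_eventually)
qed (use nonneg in simp)

lemma integral_atLeast_approx_by_antiderivative:
  fixes \<Phi> W g q w :: "real \<Rightarrow> real"
  assumes \<Phi>_deriv: "\<And>x. x \<ge> a \<Longrightarrow> (\<Phi> has_real_derivative q x - g x) (at x)"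
    and W_deriv: "\<And>x. x \<ge> a \<Longrightarrow> (W has_real_derivative w x) (at x)"
    and q_le: "\<And>x. x \<ge> a \<Longrightarrow> \<bar>q x\<bar> \<le> w x"
    and \<Phi>_lim: "(\<Phi> \<longlongrightarrow> 0) at_top" and W_lim: "(W \<longlongrightarrow> 0) at_top"
    and g_nonneg: "\<And>x. g x \<ge> 0" and g_cont: "continuous_on {a..} g"
  shows "g integrable_on {a..} \<and> \<bar>integral {a..} g - \<Phi> a\<bar> \<le> - W a"
proof -
  have w_nonneg: "w x \<ge> 0" if "x \<ge> a" for x
    using q_le[OF that] by linarith
  have w_int: "(w has_integral - W a) {a..}"
    using has_integral_atLeast_of_deriv[OF W_deriv w_nonneg W_lim] by simp
  have "((\<lambda>x. g x - q x + w x) has_integral (0 - (- \<Phi> a + W a))) {a..}"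
  proof (rule has_integral_atLeast_of_deriv)
    show "((\<lambda>x. - \<Phi> x + W x) has_real_derivative g x - q x + w x) (at x)" if "x \<ge> a" for x
      using DERIV_add[OF DERIV_minus[OF \<Phi>_deriv] W_deriv, OF that that] by simp
    show "g x - q x + w x \<ge> 0" if "x \<ge> a" for x
      using q_le[OF that] g_nonneg[of x] by linarith
    show "((\<lambda>x. - \<Phi> x + W x) \<longlongrightarrow> 0) at_top"
      using tendsto_add[OF tendsto_minus[OF \<Phi>_lim] W_lim] by simp
  qed
  from has_integral_diff[OF this w_int]
  have gq_int: "((\<lambda>x. g x - q x) has_integral \<Phi> a) {a..}"
    by simp
  have "(\<lambda>x. g x - (g x - q x)) \<in> borel_measurable (lebesgue_on {a..})"
    using continuous_imp_measurable_on_sets_lebesgue[OF g_cont]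
      integrable_imp_measurable[OF has_integral_integrable[OF gq_int]]
    by (rule borel_measurable_diff) simp
  then have q_meas: "q \<in> borel_measurable (lebesgue_on {a..})"
    by simp
  have q_int: "q integrable_on {a..}"
  proof (rule measurable_bounded_by_integrable_imp_integrable[OF q_meas])
    show "w integrable_on {a..}"
      using w_int by blast
    show "norm (q x) \<le> w x" if "x \<in> {a..}" for x
      using q_le that by simp
  qed simp_all
  have g_int: "g integrable_on {a..}"
    using integrable_add[OF has_integral_integrable[OF gq_int] q_int] by simp
  have "integral {a..} g - \<Phi> a = integral {a..} q"
    using integral_diff[OF g_int q_int] integral_unique[OF gq_int] by simp
  moreover have "norm (integral {a..} q) \<le> integral {a..} w"
  proof (rule integral_norm_bound_integral[OF q_int])
    show "w integrable_on {a..}"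
      using w_int by blast
  qed (use q_le in simp)
  ultimately show ?thesis
    using g_int integral_unique[OF w_int] by simp
qed

lemma mult_le_const_plus_cube:
  fixes t r :: real
  assumes "t \<ge> 0" "r \<ge> 0"
  shows "r * t \<le> r * (1 + 16 * r) + t ^ 3 / 16"
proof (cases "t \<le> 1 + 16 * r")
  case True
  then have "r * t \<le> r * (1 + 16 * r)"
    using assms by (intro mult_left_mono) auto
  moreover have "t ^ 3 / 16 \<ge> 0"
    using assms by simp
  ultimately show ?thesis
    by linarith
next
  case False
  then have "t * t \<ge> 1 * t"
    using assms by (intro mult_right_mono) auto
  then have "t ^ 2 \<ge> 16 * r"
    using False by (simp add: power2_eq_square)
  then have "t * t ^ 2 \<ge> t * (16 * r)"
    using assms by (intro mult_left_mono) auto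
  then have "t ^ 3 / 16 \<ge> r * t"
    by (simp add: power3_eq_cube power2_eq_square algebra_simps)
  then show ?thesis
    using assms mult_nonneg_nonneg[of r "1 + 16 * r"] by linarith
qed

lemma powr_le_powr_mult_exp:
  fixes a y r :: real
  assumes "1 \<le> a" "a \<le> y" "r \<ge> 0"
  shows "y powr r \<le> a powr r * exp (r * (y - a))"
proof -
  have "ln (y / a) \<le> y / a - 1"
    using assms by (intro ln_le_minus_one) auto
  also have "\<dots> = (y - a) / a"
    using assms by (simp add: field_simps)
  also have "\<dots> \<le> y - a"
    using assms divide_left_mono[of 1 a "y - a"] by simp
  finally have "(y / a) powr r \<le> exp (r * (y - a))"
    using assms by (simp add: powr_def mult_left_mono)
  moreover have "y powr r = a powr r * (y / a) powr r"
    using powr_mult[of a "y / a" r] assms by simp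
  ultimately show ?thesis
    by (simp add: mult_left_mono)
qed

definition dG :: "real \<Rightarrow> real \<Rightarrow> real" where
  "dG lam x = 3 * x ^ 2 / 8 - lam * x + lam ^ 2 / 2"

lemma has_real_derivative_G: "(G lam has_real_derivative dG lam x) (at x)"
  unfolding G_def dG_def by (rule derivative_eq_intros refl | simp)+

lemma deriv_G: "deriv (G lam) x = dG lam x"
  by (rule DERIV_imp_deriv[OF has_real_derivative_G])

lemma has_real_derivative_dG: "(dG lam has_real_derivative 3 * x / 4 - lam) (at x)"
  unfolding dG_def by (rule derivative_eq_intros refl | simp)+

lemma dG_ge:
  assumes "lam \<le> y / 3" "y \<ge> 0"
  shows "dG lam y \<ge> 7 * y ^ 2 / 72"
proof -
  have "dG lam y - 7 * y ^ 2 / 72 = 1 / 2 * (lam - y / 3) * (lam - 5 * y / 3)"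
    unfolding dG_def by (simp add: algebra_simps power2_eq_square)
  also have "\<dots> \<ge> 0"
    using assms by (simp add: zero_le_mult_iff)
  finally show ?thesis by simp
qed

lemma dG_pos:
  assumes "lam \<le> y / 3" "y > 0"
  shows "dG lam y > 0"
proof -
  have "7 * y ^ 2 / 72 > 0"
    using assms by simp
  then show ?thesis
    using dG_ge[of lam y] assms by linarith
qed

lemma dG_mono:
  assumes "a \<le> y" "lam \<le> a / 3" "a \<ge> 0"
  shows "dG lam a \<le> dG lam y"
proof -
  have "dG lam y - dG lam a = (y - a) * (3 * (y + a) / 8 - lam)"
    unfolding dG_def by (simp add: field_simps power2_eq_square)
  also have "\<dots> \<ge> 0"
    using assms by (intro mult_nonneg_nonneg) auto
  finally show ?thesis by simp
qed

lemma G_diff_ge_cube: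
  assumes "a \<le> y" "lam \<le> a / 3" "a \<ge> 0"
  shows "G lam y - G lam a \<ge> (y - a) ^ 3 / 8"
proof -
  define t where "t = y - a"
  have t: "t \<ge> 0" "y = a + t"
    using assms by (auto simp: t_def)
  define Q where "Q = (y ^ 2 + y * a + a ^ 2) / 8 - lam * (y + a) / 2 + lam ^ 2 / 2"
  have diff: "G lam y - G lam a = t * Q"
    unfolding G_def Q_def t(2) by (simp add: field_simps power2_eq_square power3_eq_cube)
  have "Q - (7 * a ^ 2 / 72 + 5 / 24 * a * t + t ^ 2 / 8) = (lam - a / 3) / 2 * (lam + a / 3 - (y + a))"
    unfolding Q_def t(2) by (simp add: field_simps power2_eq_square)
  moreover have "(lam - a / 3) / 2 * (lam + a / 3 - (y + a)) \<ge> 0"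
    using assms t by (simp add: zero_le_mult_iff)
  moreover have "a * t \<ge> 0" "a ^ 2 \<ge> 0"
    using assms t by auto
  ultimately have "Q \<ge> t ^ 2 / 8"
    by linarith
  then have "t * Q \<ge> t * (t ^ 2 / 8)"
    using t by (intro mult_left_mono) auto
  then show ?thesis
    using diff by (simp add: t_def power3_eq_cube power2_eq_square)
qed

text \<open>As G'' = 3y/4 - \<lambda>, this says G'' \<le> 80 G'^2 / y^3.\<close>

lemma d2G_le_dG_sq:
  assumes "lam \<le> y / 3" "y \<ge> 1"
  shows "y ^ 3 * (3 * y / 4 - lam) \<le> 80 * (dG lam y) ^ 2"
proof (cases "lam \<ge> 0")
  case True
  have "(7 * y ^ 2 / 72) ^ 2 \<le> (dG lam y) ^ 2"
    using dG_ge assms by (intro power_mono) auto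
  moreover have "y ^ 3 * (3 * y / 4 - lam) \<le> y ^ 3 * (3 * y / 4)"
    using True assms by (intro mult_left_mono) auto
  moreover have "80 * (7 * y ^ 2 / 72) ^ 2 = 245 / 324 * y ^ 4" "y ^ 3 * (3 * y / 4) = 3 / 4 * y ^ 4"
    by (simp_all add: power2_eq_square power3_eq_cube power4_eq_xxxx)
  moreover have "y ^ 4 \<ge> 0"
    by simp
  ultimately show ?thesis
    by linarith
next
  case False
  define m where "m = - lam"
  have m: "m > 0"
    using False m_def by auto
  have "dG lam y \<ge> y * (3 * y / 8 + m)"
    unfolding dG_def m_def by (simp add: algebra_simps power2_eq_square)
  then have "(y * (3 * y / 8 + m)) ^ 2 \<le> (dG lam y) ^ 2"
    using m assms by (intro power_mono) auto
  moreover have "y ^ 3 * (3 * y / 4 - lam) \<le> 16 / 3 * (y * (3 * y / 8 + m)) ^ 2"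
  proof -
    have "y ^ 3 * (3 * y / 4 - lam) = y ^ 3 * (3 * y / 4 + m)"
      by (simp add: m_def)
    also have "\<dots> \<le> 16 / 3 * (y * y * (3 * y / 8) * (3 * y / 8 + m))"
      using m assms by (simp add: power3_eq_cube algebra_simps)
    also have "\<dots> \<le> 16 / 3 * (y * (3 * y / 8 + m)) ^ 2"
      using m assms by (simp add: power2_eq_square mult_left_mono mult_right_mono algebra_simps)
    finally show ?thesis .
  qed
  moreover have "(y * (3 * y / 8 + m)) ^ 2 \<ge> 0"
    by simp
  ultimately show ?thesis
    by linarith
qed

lemma has_real_derivative_laplace_term:
  assumes "y > 0" "dG lam y \<noteq> 0"
  shows "((\<lambda>y. y powr r / dG lam y * exp (- G lam y)) has_real_derivative
      (r / (y * dG lam y) - (3 * y / 4 - lam) / (dG lam y) ^ 2 - 1) * (y powr r * exp (- G lam y)))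
      (at y)"
proof -
  have "((\<lambda>y. y powr r / dG lam y * exp (- G lam y)) has_real_derivative
     (r * y powr (r - 1) * dG lam y - y powr r * (3 * y / 4 - lam)) / (dG lam y * dG lam y)
        * exp (- G lam y) + exp (- G lam y) * (- dG lam y) * (y powr r / dG lam y)) (at y)"
    by (intro DERIV_mult DERIV_divide has_real_derivative_powr has_real_derivative_dG
        DERIV_fun_exp DERIV_minus has_real_derivative_G assms)
  moreover have "y powr (r - 1) = y powr r / y"
    using assms by (simp add: powr_diff)
  ultimately show ?thesis
    using assms by (simp add: field_simps power2_eq_square)
qed

lemma laplace_correction_le:
  assumes "r \<ge> 0" "lam \<le> y / 3" "y \<ge> 1"
  shows "\<bar>r / (y * dG lam y) - (3 * y / 4 - lam) / (dG lam y) ^ 2\<bar> \<le> (11 * r + 80) / y ^ 3"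
proof -
  have pos: "dG lam y > 0"
    using dG_pos assms by simp
  have "7 * y ^ 3 / 72 \<le> y * dG lam y"
    using mult_left_mono[OF dG_ge, of lam y y] assms by (simp add: power2_eq_square power3_eq_cube)
  then have "r / (y * dG lam y) \<le> r / (7 * y ^ 3 / 72)"
    using assms pos by (intro divide_left_mono) auto
  also have "\<dots> = 72 / 7 * r / y ^ 3"
    by simp
  also have "\<dots> \<le> 11 * r / y ^ 3"
    using assms by (intro divide_right_mono) auto
  finally have first: "r / (y * dG lam y) \<le> 11 * r / y ^ 3" .
  have second: "(3 * y / 4 - lam) / (dG lam y) ^ 2 \<le> 80 / y ^ 3"
    using d2G_le_dG_sq[OF assms(2,3)] assms pos by (simp add: field_simps)
  have "r / (y * dG lam y) \<ge> 0" "(3 * y / 4 - lam) / (dG lam y) ^ 2 \<ge> 0"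
    using assms pos by auto
  then show ?thesis
    using first second by (simp add: add_divide_distrib)
qed

text \<open>The majorant dG \<lambda> y * e^(-G(y)/2) is chosen for its explicit antiderivative -2 e^(-G(y)/2).\<close>

lemma integrand_le_envelope:
  assumes "r \<ge> 0" "1 \<le> a" "3 * lam \<le> a" "a \<le> y"
  shows "y powr r * exp (- G lam y) \<le>
    exp (r * (1 + 16 * r)) * a powr r * exp (- G lam a / 2) / dG lam a
      * (dG lam y * exp (- G lam y / 2))"
proof -
  define E where "E = exp (- G lam a / 2)"
  have "r * (y - a) \<le> r * (1 + 16 * r) + (y - a) ^ 3 / 16"
    using mult_le_const_plus_cube[of "y - a" r] assms by simp
  also have "(y - a) ^ 3 / 16 \<le> (G lam y - G lam a) / 2"
    using G_diff_ge_cube[of a y lam] assms by simp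
  finally have "exp (r * (y - a)) \<le> exp (r * (1 + 16 * r) + (G lam y - G lam a) / 2)"
    by simp
  also have "\<dots> * exp (- G lam y) = exp (r * (1 + 16 * r)) * E * exp (- G lam y / 2)"
    unfolding E_def by (simp flip: exp_add) (simp add: field_simps)
  finally have exp_le: "exp (r * (y - a)) * exp (- G lam y) \<le> exp (r * (1 + 16 * r)) * E * exp (- G lam y / 2)"
    by simp
  have "y powr r * exp (- G lam y) \<le> a powr r * exp (r * (y - a)) * exp (- G lam y)"
    using powr_le_powr_mult_exp assms by (intro mult_right_mono) auto
  also have "\<dots> \<le> a powr r * (exp (r * (1 + 16 * r)) * E * exp (- G lam y / 2))"
    using exp_le by (simp add: mult.assoc mult_left_mono)
  also have "\<dots> \<le> a powr r * (exp (r * (1 + 16 * r)) * E * exp (- G lam y / 2)) * (dG lam y / dG lam a)"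
  proof -
    have "1 \<le> dG lam y / dG lam a"
      using dG_mono[of a y lam] dG_pos[of lam a] assms by simp
    moreover have "0 \<le> a powr r * (exp (r * (1 + 16 * r)) * E * exp (- G lam y / 2))"
      by (simp add: E_def)
    ultimately show ?thesis
      by (metis mult_left_mono mult.right_neutral)
  qed
  finally show ?thesis
    unfolding E_def by (simp add: field_simps)
qed

lemma integral_laplace_approx:
  fixes r lam a :: real
  assumes r: "r \<ge> 0" and a: "1 \<le> a" "3 * lam \<le> a"
  shows "(\<lambda>y. y powr r * exp (- G lam y)) integrable_on {a..} \<and>
    \<bar>integral {a..} (\<lambda>y. y powr r * exp (- G lam y)) - a powr r / dG lam a * exp (- G lam a)\<bar>
    \<le> 2 * exp (r * (1 + 16 * r)) * (11 * r + 80) * \<bar>a powr r / dG lam a * exp (- G lam a)\<bar> * (1 / a ^ 3)"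
proof -
  define g where "g y = y powr r * exp (- G lam y)" for y
  define \<rho> where "\<rho> y = r / (y * dG lam y) - (3 * y / 4 - lam) / (dG lam y) ^ 2" for y
  define K where "K = (11 * r + 80) / a ^ 3 * (exp (r * (1 + 16 * r)) * a powr r * exp (- G lam a / 2) / dG lam a)"
  have dG_pos_a: "dG lam y > 0" if "y \<ge> a" for y
    using dG_pos[of lam y] a that by simp
  have "g integrable_on {a..} \<and> \<bar>integral {a..} g - a powr r / dG lam a * exp (- G lam a)\<bar>
      \<le> - (- 2 * K * exp (- G lam a / 2))"
  proof (rule integral_atLeast_approx_by_antiderivative[where q = "\<lambda>y. \<rho> y * g y"
        and w = "\<lambda>y. K * (dG lam y * exp (- G lam y / 2))"])
    show "((\<lambda>y. y powr r / dG lam y * exp (- G lam y)) has_real_derivative \<rho> x * g x - g x) (at x)"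
      if "x \<ge> a" for x
      using has_real_derivative_laplace_term[of x lam r] dG_pos_a[OF that] a that
      unfolding \<rho>_def g_def by (simp add: left_diff_distrib)
    show "((\<lambda>y. - 2 * K * exp (- G lam y / 2)) has_real_derivative
        K * (dG lam y * exp (- G lam y / 2))) (at y)" for y
      by (rule derivative_eq_intros has_real_derivative_G refl | simp)+
    show "\<bar>\<rho> x * g x\<bar> \<le> K * (dG lam x * exp (- G lam x / 2))" if "x \<ge> a" for x
    proof -
      have "\<bar>\<rho> x\<bar> \<le> (11 * r + 80) / x ^ 3"
        unfolding \<rho>_def using laplace_correction_le[of r lam x] r a that by simp
      also have "\<dots> \<le> (11 * r + 80) / a ^ 3"
        using r a that by (intro divide_left_mono power_mono) auto
      finally have "\<bar>\<rho> x\<bar> \<le> (11 * r + 80) / a ^ 3" .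
      then have "\<bar>\<rho> x * g x\<bar> \<le> (11 * r + 80) / a ^ 3 * g x"
        using mult_right_mono[of "\<bar>\<rho> x\<bar>" _ "g x"] abs_of_nonneg[of "g x"]
        by (simp add: abs_mult g_def del: times_divide_eq_left)
      also have "\<dots> \<le> K * (dG lam x * exp (- G lam x / 2))"
        using mult_left_mono[OF integrand_le_envelope[OF r a that], of "(11 * r + 80) / a ^ 3"] r a
        unfolding K_def g_def by (simp only: mult.assoc zero_le_divide_iff) simp
      finally show ?thesis .
    qed
    show "((\<lambda>y. y powr r / dG lam y * exp (- G lam y)) \<longlongrightarrow> 0) at_top"
      using r unfolding G_def dG_def by real_asymp
    show "((\<lambda>y. - 2 * K * exp (- G lam y / 2)) \<longlongrightarrow> 0) at_top"
      unfolding G_def by real_asymp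
    show "continuous_on {a..} g"
      using a unfolding g_def G_def by (intro continuous_intros) auto
  qed (simp add: g_def)
  moreover have "- (- 2 * K * exp (- G lam a / 2))
      = 2 * exp (r * (1 + 16 * r)) * (11 * r + 80) * \<bar>a powr r / dG lam a * exp (- G lam a)\<bar> * (1 / a ^ 3)"
  proof -
    define E where "E = exp (- G lam a / 2)"
    have "exp (- G lam a) = E * E"
      unfolding E_def by (simp flip: exp_add)
    moreover have "\<bar>a powr r / dG lam a * exp (- G lam a)\<bar> = a powr r / dG lam a * exp (- G lam a)"
      using dG_pos_a[of a] by simp
    ultimately show ?thesis
      using dG_pos_a[of a] a unfolding K_def E_def[symmetric] by (simp add: field_simps)
  qed
  ultimately show ?thesis
    unfolding g_def by simp
qed

theorem lemma5p2:
  fixes r :: real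
  assumes "r \<ge> 0"
  shows "\<exists>C. \<forall>lam a. a \<ge> max 1 (3 * lam) \<longrightarrow>
           (\<lambda>y. y powr r * exp (- G lam y)) integrable_on {a..} \<and>
           \<bar>integral {a..} (\<lambda>y. y powr r * exp (- G lam y))
              - a powr r / deriv (G lam) a * exp (- G lam a)\<bar>
           \<le> C * \<bar>a powr r / deriv (G lam) a * exp (- G lam a)\<bar> * (1 / a ^ 3)"
proof (intro exI allI impI)
  fix lam a :: real
  assume "a \<ge> max 1 (3 * lam)"
  then show "(\<lambda>y. y powr r * exp (- G lam y)) integrable_on {a..} \<and>
      \<bar>integral {a..} (\<lambda>y. y powr r * exp (- G lam y)) - a powr r / deriv (G lam) a * exp (- G lam a)\<bar>
      \<le> 2 * exp (r * (1 + 16 * r)) * (11 * r + 80)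
        * \<bar>a powr r / deriv (G lam) a * exp (- G lam a)\<bar> * (1 / a ^ 3)"
    using integral_laplace_approx[OF assms] by (simp add: deriv_G)
qed

end
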